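(* For every $d\ge 1$ there is a constant $C_d$ such that for every $\sigma\in(0,1)$ and every finite $\sigma$-exposed set $L$ of closed line segments in $\mathbb{R}^d$, the density of $L$ is at most $C_d\,\sigma^{-2d-2}$.
   Context: For sets $X, Y\subseteq\mathbb{R}^d$ and $\sigma>0$, $X$ $\sigma$-shadows $Y$ if $\max_{q\in Y} \mathrm{dist}(q, X) \le \sigma\cdot \mathrm{diam}(Y)$, where $\mathrm{dist}(q,X)=\min_{p\in X}\|q-p\|$. A set of objects is $\sigma$-exposed if no object in the set $\sigma$-shadows another (distinct) object of the set. The density of a finite set $\mathcal{O}$ of objects in $\mathbb{R}^d$ is the maximum, over all closed balls $B$, of the number of objects $o\in\mathcal{O}$ that intersect $B$ and satisfy $\mathrm{diam}(o)\ge \mathrm{diam}(B)$. *)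

theory Defs
  imports "HOL-Analysis.Analysis"
begin

definition shadows :: "real \<Rightarrow> 'a::metric_space set \<Rightarrow> 'a set \<Rightarrow> bool" where
  "shadows \<sigma> X Y \<longleftrightarrow> (\<forall>q\<in>Y. infdist q X \<le> \<sigma> * diameter Y)"

definition exposed :: "real \<Rightarrow> 'a::metric_space set set \<Rightarrow> bool" where
  "exposed \<sigma> F \<longleftrightarrow> (\<forall>X\<in>F. \<forall>Y\<in>F. X \<noteq> Y \<longrightarrow> \<not> shadows \<sigma> X Y)"

definition density :: "'a::metric_space set set \<Rightarrow> nat" where
  "density F = Sup {card {S\<in>F. S \<inter> cball c r \<noteq> {} \<and> diameter S \<ge> diameter (cball c r)}
                    | c r. r \<ge> 0}"

definition is_segment :: "'a::real_vector set \<Rightarrow> bool" where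
  "is_segment s \<longleftrightarrow> (\<exists>a b. a \<noteq> b \<and> s = closed_segment a b)"

end

theory Submission
  imports Defs
begin

text \<open>Fix a closed ball of radius \<open>r\<close>. Each segment counted by the density meets the ball at a
  point \<open>a + t(b - a)\<close> and has length at least \<open>2r\<close>. Record its unit direction, the parameter
  \<open>t\<close> and the position of the meeting point relative to the ball, each rounded to a grid of mesh
  \<open>1/M\<close> with \<open>M \<approx> 3d/\<sigma>\<close>. If two segments receive the same record, then in direction, anchor
  parameter and anchor position (measured in units of the shorter length) they differ by at most
  \<open>\<sigma>/3\<close>, and this forces the longer one to \<open>\<sigma>\<close>-shadow the shorter. So in an exposed family the
  records are distinct, and the density is at most the number of records,
  \<open>(2M + 1)\<^sup>2\<^sup>d\<^sup>+\<^sup>1 = O(\<sigma>\<^sup>-\<^sup>2\<^sup>d\<^sup>-\<^sup>1)\<close>.\<close>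

lemma diameter_closed_segment:
  fixes a b :: "'a::real_normed_vector"
  shows "diameter (closed_segment a b) = dist a b"
proof (rule order_antisym)
  show "diameter (closed_segment a b) \<le> dist a b"
  proof (rule diameter_le)
    fix x y assume "x \<in> closed_segment a b" "y \<in> closed_segment a b"
    then obtain s s' where s: "x = (1 - s) *\<^sub>R a + s *\<^sub>R b" "0 \<le> s" "s \<le> 1"
      and s': "y = (1 - s') *\<^sub>R a + s' *\<^sub>R b" "0 \<le> s'" "s' \<le> 1"
      by (auto simp: in_segment)
    have "x - y = (s - s') *\<^sub>R (b - a)" by (simp add: s s' algebra_simps)
    then have "norm (x - y) = \<bar>s - s'\<bar> * norm (b - a)" by simp
    also have "\<dots> \<le> 1 * norm (b - a)"
      by (rule mult_right_mono) (use s s' in auto)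
    finally show "norm (x - y) \<le> dist a b" by (simp add: dist_norm norm_minus_commute)
  qed simp
  show "dist a b \<le> diameter (closed_segment a b)"
    by (rule diameter_bounded_bound) (auto intro: compact_imp_bounded)
qed

lemma closed_segment_eq_sgn_image:
  fixes a b :: "'a::real_normed_vector"
  assumes "a \<noteq> b"
  shows "closed_segment a b = (\<lambda>s. a + s *\<^sub>R sgn (b - a)) ` {0..dist a b}"
proof -
  have L: "dist a b > 0" using assms by simp
  have "(1 - u) *\<^sub>R a + u *\<^sub>R b = a + (u * dist a b) *\<^sub>R sgn (b - a)" for u
    using L by (simp add: sgn_div_norm dist_norm norm_minus_commute algebra_simps)
  then have "closed_segment a b = (\<lambda>u. a + (u * dist a b) *\<^sub>R sgn (b - a)) ` {0..1}"
    by (simp add: closed_segment_image_interval)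
  also have "\<dots> = (\<lambda>s. a + s *\<^sub>R sgn (b - a)) ` ((\<lambda>u. u * dist a b) ` {0..1})"
    by (simp add: image_image)
  also have "(\<lambda>u. u * dist a b) ` {0..1} = {0..dist a b}"
    using L by (simp add: image_mult_atLeastAtMost_if' mult.commute)
  finally show ?thesis .
qed

lemma exists_matching_offset:
  fixes s t t' l l' e :: real
  assumes s: "s \<in> {0..l}" and "l \<le> l'" and t: "t \<in> {0..1}" and t': "t' \<in> {0..1}"
    and tt': "\<bar>t - t'\<bar> \<le> e"
  shows "\<exists>y\<in>{0..l'}. \<bar>(s - t * l) - (y - t' * l')\<bar> \<le> e * l"
proof -
  define z where "z = s - t * l + t' * l'"
  have "0 \<le> l" "0 \<le> e" using s tt' by auto
  have "t * l \<le> (t' + e) * l" "t' * l \<le> (t + e) * l"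
    using tt' \<open>0 \<le> l\<close> by (intro mult_right_mono; linarith)+
  moreover have "t' * l \<le> t' * l'" "(1 - t') * l \<le> (1 - t') * l'"
    using t' \<open>l \<le> l'\<close> by (intro mult_left_mono; simp)+
  ultimately have "- (e * l) \<le> z" "z \<le> l' + e * l"
    using s by (auto simp: z_def algebra_simps)
  with \<open>0 \<le> e\<close> \<open>0 \<le> l\<close> \<open>l \<le> l'\<close> show ?thesis
    by (intro bexI[of _ "max 0 (min z l')"]) (auto simp: z_def max_def min_def)
qed

lemma closed_segment_shadows_closed_segment:
  fixes a b a' b' :: "'a::real_normed_vector"
  assumes ab: "a \<noteq> b" and ab': "a' \<noteq> b'" and shorter: "dist a b \<le> dist a' b'"
    and t: "t \<in> {0..1}" and t': "t' \<in> {0..1}" and tt': "\<bar>t - t'\<bar> \<le> e"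
    and direction: "norm (sgn (b - a) - sgn (b' - a')) \<le> e"
    and anchor: "dist (a + t *\<^sub>R (b - a)) (a' + t' *\<^sub>R (b' - a')) \<le> e * dist a b"
    and e\<sigma>: "3 * e \<le> \<sigma>"
  shows "shadows \<sigma> (closed_segment a' b') (closed_segment a b)"
  unfolding shadows_def diameter_closed_segment
proof
  define l where "l = dist a b"
  define l' where "l' = dist a' b'"
  define u where "u = sgn (b - a)"
  define u' where "u' = sgn (b' - a')"
  have e0: "0 \<le> e" using tt' by linarith
  have "0 < l" "l \<le> l'" using ab shorter by (simp_all add: l_def l'_def)
  have b_a: "b - a = l *\<^sub>R u" and b'_a': "b' - a' = l' *\<^sub>R u'"
    using ab ab' by (simp_all add: l_def l'_def u_def u'_def sgn_div_norm dist_norm norm_minus_commute)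
  have "norm u' = 1" using ab' by (simp add: u'_def norm_sgn)
  fix p assume "p \<in> closed_segment a b"
  then obtain s where s: "s \<in> {0..l}" and p: "p = a + s *\<^sub>R u"
    using ab by (auto simp: closed_segment_eq_sgn_image l_def u_def)
  \<comment> \<open>match \<open>p\<close> with the point of the longer segment at almost the same offset from its anchor\<close>
  obtain y where y: "y \<in> {0..l'}" and zy: "\<bar>(s - t * l) - (y - t' * l')\<bar> \<le> e * l"
    using exists_matching_offset[OF s \<open>l \<le> l'\<close> t t' tt'] by blast
  have x: "a' + y *\<^sub>R u' \<in> closed_segment a' b'"
    using ab' y by (auto simp: closed_segment_eq_sgn_image l'_def u'_def)
  have "p - (a' + y *\<^sub>R u') = ((a + t *\<^sub>R (b - a)) - (a' + t' *\<^sub>R (b' - a')))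
        + (s - t * l) *\<^sub>R (u - u') + ((s - t * l) - (y - t' * l')) *\<^sub>R u'"
    by (simp add: p b_a b'_a' algebra_simps)
  also have "norm \<dots> \<le> e * l + l * e + e * l"
  proof (intro norm_triangle_le add_mono)
    show "norm ((a + t *\<^sub>R (b - a)) - (a' + t' *\<^sub>R (b' - a'))) \<le> e * l"
      using anchor by (simp add: l_def dist_norm)
    have "0 \<le> t * l" "t * l \<le> l" using t \<open>0 < l\<close> by (auto simp: mult_left_le_one_le)
    then have "\<bar>s - t * l\<bar> \<le> l" using s by auto
    then show "norm ((s - t * l) *\<^sub>R (u - u')) \<le> l * e"
      using direction by (simp add: u_def u'_def mult_mono e0)
    show "norm (((s - t * l) - (y - t' * l')) *\<^sub>R u') \<le> e * l" using zy \<open>norm u' = 1\<close> by simp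
  qed
  also have "\<dots> \<le> \<sigma> * l" using e\<sigma> \<open>0 < l\<close> by (simp add: algebra_simps)
  finally have "dist p (a' + y *\<^sub>R u') \<le> \<sigma> * l" by (simp add: dist_norm)
  then show "infdist p (closed_segment a' b') \<le> \<sigma> * dist a b"
    using infdist_le[OF x, of p] by (simp add: l_def)
qed

lemma abs_diff_le_if_floor_mult_eq:
  fixes x y :: real
  assumes "0 < M" "\<lfloor>x * M\<rfloor> = \<lfloor>y * M\<rfloor>"
  shows "\<bar>x - y\<bar> \<le> 1 / M"
proof -
  have "\<bar>x * M - y * M\<bar> < 1"
    using assms(2) floor_correct[of "x * M"] floor_correct[of "y * M"] by linarith
  then have "\<bar>x - y\<bar> * M < 1" by (simp add: left_diff_distrib[symmetric] abs_mult abs_of_pos assms(1))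
  then show ?thesis using assms(1) by (simp add: field_simps)
qed

lemma floor_mult_mem_if_abs_le_1:
  fixes x :: real
  assumes "\<bar>x\<bar> \<le> 1"
  shows "\<lfloor>x * real M\<rfloor> \<in> {- int M..int M}"
proof -
  have "\<bar>x * real M\<bar> \<le> real M" using assms by (simp add: abs_mult mult_left_le_one_le)
  then show ?thesis by (auto simp: le_floor_iff floor_le_iff abs_le_iff)
qed

definition grid_cell :: "nat \<Rightarrow> real^'n \<Rightarrow> 'n \<Rightarrow> int" where
  "grid_cell M x i = \<lfloor>x $ i * real M\<rfloor>"

lemma norm_diff_le_if_grid_cell_eq:
  fixes x y :: "real^'n"
  assumes "0 < M" "grid_cell M x = grid_cell M y"
  shows "norm (x - y) \<le> CARD('n) / M"
proof -
  have "\<bar>x $ i - y $ i\<bar> \<le> 1 / M" for i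
    by (rule abs_diff_le_if_floor_mult_eq) (use assms in \<open>auto simp: grid_cell_def fun_eq_iff\<close>)
  then have "(\<Sum>i\<in>UNIV. \<bar>(x - y) $ i\<bar>) \<le> (\<Sum>i\<in>(UNIV::'n set). 1 / M)"
    by (intro sum_mono) simp
  with norm_le_l1_cart[of "x - y"] have "norm (x - y) \<le> (\<Sum>i\<in>(UNIV::'n set). 1 / M)"
    by linarith
  then show ?thesis by simp
qed

lemma grid_cell_mem_if_norm_le_1:
  fixes x :: "real^'n"
  assumes "norm x \<le> 1"
  shows "grid_cell M x \<in> (UNIV::'n set) \<rightarrow>\<^sub>E {- int M..int M}"
proof -
  have "\<bar>x $ i\<bar> \<le> 1" for i using assms component_le_norm_cart[of x i] by linarith
  then show ?thesis
    using floor_mult_mem_if_abs_le_1 by (simp add: grid_cell_def PiE_UNIV_domain)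
qed

text \<open>The segment from \<open>a\<close> to \<open>b\<close> meets \<open>cball c r\<close> at its anchor \<open>a + t(b - a)\<close>. For
  \<open>r = 0\<close> the last component is the cell of \<open>0\<close> (as \<open>x /\<^sub>R 0 = 0\<close>), which is harmless since the
  anchor is then \<open>c\<close> itself.\<close>
definition segment_key ::
    "nat \<Rightarrow> real^'n \<Rightarrow> real \<Rightarrow> real^'n \<Rightarrow> real^'n \<Rightarrow> real \<Rightarrow> ('n \<Rightarrow> int) \<times> int \<times> ('n \<Rightarrow> int)" where
  "segment_key M c r a b t =
     (grid_cell M (sgn (b - a)), \<lfloor>t * real M\<rfloor>, grid_cell M ((a + t *\<^sub>R (b - a) - c) /\<^sub>R r))"

definition key_space :: "nat \<Rightarrow> (('n::finite \<Rightarrow> int) \<times> int \<times> ('n \<Rightarrow> int)) set" where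
  "key_space M = (UNIV \<rightarrow>\<^sub>E {- int M..int M}) \<times> {- int M..int M} \<times> (UNIV \<rightarrow>\<^sub>E {- int M..int M})"

lemma finite_key_space: "finite (key_space M)"
  by (simp add: key_space_def finite_PiE)

lemma card_key_space:
  "card (key_space M :: (('n::finite \<Rightarrow> int) \<times> int \<times> ('n \<Rightarrow> int)) set) = (2 * M + 1) ^ (2 * CARD('n) + 1)"
proof -
  have interval: "card {- int M..int M} = 2 * M + 1" by simp
  then have box: "card (UNIV \<rightarrow>\<^sub>E {- int M..int M} :: ('n \<Rightarrow> int) set) = (2 * M + 1) ^ CARD('n)"
    by (simp add: card_PiE)
  have "x ^ k * (x * x ^ k) = x ^ (2 * k + 1)" for x k :: nat
    by (simp add: power_add power_mult_distrib mult_2)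
  then show ?thesis
    unfolding key_space_def card_cartesian_product box interval .
qed

lemma segment_key_mem_key_space:
  assumes "a \<noteq> b" "t \<in> {0..1}" "dist c (a + t *\<^sub>R (b - a)) \<le> r"
  shows "segment_key M c r a b t \<in> key_space M"
proof -
  have "0 \<le> r" using assms(3) zero_le_dist order_trans by blast
  then have "norm (x /\<^sub>R r) \<le> 1" if "norm x \<le> r" for x :: "real^'n"
    using that by (cases "r = 0") (auto simp: field_simps)
  then have "norm ((a + t *\<^sub>R (b - a) - c) /\<^sub>R r) \<le> 1"
    using assms(3) by (simp add: dist_norm norm_minus_commute)
  moreover have "norm (sgn (b - a)) \<le> 1" by (simp add: norm_sgn)
  moreover have "\<lfloor>t * real M\<rfloor> \<in> {- int M..int M}"
    using assms(2) by (intro floor_mult_mem_if_abs_le_1) simp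
  ultimately show ?thesis
    by (simp only: segment_key_def key_space_def mem_Times_iff fst_conv snd_conv grid_cell_mem_if_norm_le_1)
qed

lemma shadows_if_segment_key_eq:
  fixes a b a' b' c :: "real^'n" and t t' :: real
  defines "q \<equiv> a + t *\<^sub>R (b - a)" and "q' \<equiv> a' + t' *\<^sub>R (b' - a')"
  assumes ab: "a \<noteq> b" and ab': "a' \<noteq> b'" and shorter: "dist a b \<le> dist a' b'"
    and r: "r \<le> dist a b" and t: "t \<in> {0..1}" and t': "t' \<in> {0..1}"
    and q: "dist c q \<le> r" and q': "dist c q' \<le> r"
    and \<sigma>: "0 < \<sigma>" and M: "3 * CARD('n) / \<sigma> \<le> M"
    and key: "segment_key M c r a b t = segment_key M c r a' b' t'"
  shows "shadows \<sigma> (closed_segment a' b') (closed_segment a b)"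
proof (rule closed_segment_shadows_closed_segment[OF ab ab' shorter t t', where e = "\<sigma> / 3"])
  have "0 < 3 * CARD('n) / \<sigma>" using \<sigma> by simp
  then have "0 < M" using M by linarith
  have step: "CARD('n) / M \<le> \<sigma> / 3"
    using M \<sigma> \<open>0 < M\<close> by (simp add: field_simps)
  moreover have "1 / M \<le> CARD('n) / M" using \<open>0 < M\<close> by (simp add: divide_right_mono)
  moreover have "\<bar>t - t'\<bar> \<le> 1 / M"
    using abs_diff_le_if_floor_mult_eq[of "real M" t t'] \<open>0 < M\<close> key
    by (simp add: segment_key_def)
  ultimately show "\<bar>t - t'\<bar> \<le> \<sigma> / 3" by linarith
  have "grid_cell M (sgn (b - a)) = grid_cell M (sgn (b' - a'))"
    using key by (simp add: segment_key_def)
  with norm_diff_le_if_grid_cell_eq[OF \<open>0 < M\<close>] step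
  show "norm (sgn (b - a) - sgn (b' - a')) \<le> \<sigma> / 3" by (meson order_trans)
  have "dist q q' \<le> r * (\<sigma> / 3)"
  proof (cases "r = 0")
    case True
    then show ?thesis using q q' by simp
  next
    case False
    have "0 < r" using False q zero_le_dist[of c q] by linarith
    have "grid_cell M ((q - c) /\<^sub>R r) = grid_cell M ((q' - c) /\<^sub>R r)"
      using key by (simp add: segment_key_def q_def q'_def)
    with norm_diff_le_if_grid_cell_eq[OF \<open>0 < M\<close>] step
    have "norm ((q - c) /\<^sub>R r - (q' - c) /\<^sub>R r) \<le> \<sigma> / 3" by (meson order_trans)
    moreover have "q - q' = r *\<^sub>R ((q - c) /\<^sub>R r - (q' - c) /\<^sub>R r)"
      using \<open>0 < r\<close> by (simp add: algebra_simps)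
    ultimately show ?thesis using \<open>0 < r\<close> by (simp add: dist_norm mult_left_mono)
  qed
  also have "\<dots> \<le> \<sigma> / 3 * dist a b" using r \<sigma> by (simp add: mult_right_mono mult.commute)
  finally show "dist (a + t *\<^sub>R (b - a)) (a' + t' *\<^sub>R (b' - a')) \<le> \<sigma> / 3 * dist a b"
    by (simp add: q_def q'_def)
qed simp

lemma card_exposed_segments_meeting_cball_le:
  fixes L :: "(real^'n) set set"
  assumes segments: "\<forall>s\<in>L. is_segment s" and exposed: "exposed \<sigma> L"
    and \<sigma>: "0 < \<sigma>" and M: "3 * CARD('n) / \<sigma> \<le> M" and r: "0 \<le> r"
  shows "card {s\<in>L. s \<inter> cball c r \<noteq> {} \<and> diameter s \<ge> diameter (cball c r)}
           \<le> (2 * M + 1) ^ (2 * CARD('n) + 1)"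
proof -
  define S where "S = {s\<in>L. s \<inter> cball c r \<noteq> {} \<and> diameter s \<ge> diameter (cball c r)}"
  have "\<exists>a b t. a \<noteq> b \<and> s = closed_segment a b \<and> t \<in> {0..1} \<and> dist c (a + t *\<^sub>R (b - a)) \<le> r"
    if s: "s \<in> S" for s
  proof -
    have "is_segment s" using s segments by (simp add: S_def)
    then obtain a b where ab: "a \<noteq> b" "s = closed_segment a b"
      by (auto simp: is_segment_def)
    then obtain p where "p \<in> closed_segment a b" "dist c p \<le> r" using s by (auto simp: S_def)
    then obtain t where "t \<in> {0..1}" "p = a + t *\<^sub>R (b - a)" "dist c p \<le> r"
      by (auto simp: in_segment algebra_simps)
    with ab show ?thesis by blast
  qed
  then obtain A B T where ABT: "\<And>s. s \<in> S \<Longrightarrow> A s \<noteq> B s \<and> s = closed_segment (A s) (B s)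
      \<and> T s \<in> {0..1} \<and> dist c (A s + T s *\<^sub>R (B s - A s)) \<le> r"
    by metis
  define key where "key s = segment_key M c r (A s) (B s) (T s)" for s
  have long: "r \<le> dist (A s) (B s)" if "s \<in> S" for s
    using that ABT[OF that] r diameter_closed_segment[of "A s" "B s"] by (auto simp: S_def)
  have shadows: "shadows \<sigma> X Y"
    if "X \<in> S" "Y \<in> S" "key X = key Y" "dist (A Y) (B Y) \<le> dist (A X) (B X)" for X Y
    using shadows_if_segment_key_eq[OF _ _ that(4) long[OF that(2)] _ _ _ _ \<sigma> M] that ABT
    by (metis key_def)
  have "inj_on key S"
  proof (rule inj_onI)
    fix X Y assume XY: "X \<in> S" "Y \<in> S" "key X = key Y"
    then have "shadows \<sigma> X Y \<or> shadows \<sigma> Y X"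
      using shadows[of X Y] shadows[of Y X] by (metis nle_le)
    with XY exposed show "X = Y" by (auto simp: exposed_def S_def)
  qed
  then have "card S = card (key ` S)" by (simp add: card_image)
  also have "\<dots> \<le> card (key_space M :: (('n \<Rightarrow> int) \<times> int \<times> ('n \<Rightarrow> int)) set)"
    using ABT by (intro card_mono finite_key_space) (auto simp: key_def intro!: segment_key_mem_key_space)
  finally show ?thesis by (simp add: S_def card_key_space)
qed

lemma density_exposed_segments_le:
  fixes L :: "(real^'n) set set"
  assumes "\<forall>s\<in>L. is_segment s" "exposed \<sigma> L" "0 < \<sigma>" "3 * CARD('n) / \<sigma> \<le> M"
  shows "density L \<le> (2 * M + 1) ^ (2 * CARD('n) + 1)"
  unfolding density_def
  using card_exposed_segments_meeting_cball_le[OF assms] by (intro cSup_least) auto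

lemma grid_size_le_powr:
  fixes \<sigma> :: real and n :: nat
  assumes \<sigma>: "0 < \<sigma>" "\<sigma> < 1" and n: "1 \<le> n"
  shows "real ((2 * nat \<lceil>3 * n / \<sigma>\<rceil> + 1) ^ (2 * n + 1))
           \<le> (9 * n) ^ (2 * n + 1) * \<sigma> powr - (2 * real n + 2)"
proof -
  have "1 \<le> n / \<sigma>" using \<sigma> n by (simp add: field_simps)
  moreover have "real (nat \<lceil>3 * n / \<sigma>\<rceil>) \<le> 3 * n / \<sigma> + 1"
    using \<sigma> by (simp add: of_nat_nat)
  ultimately have "2 * real (nat \<lceil>3 * n / \<sigma>\<rceil>) + 1 \<le> 9 * n / \<sigma>" by linarith
  then have "real (2 * nat \<lceil>3 * n / \<sigma>\<rceil> + 1) \<le> 9 * n / \<sigma>" by simp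
  then have "real ((2 * nat \<lceil>3 * n / \<sigma>\<rceil> + 1) ^ (2 * n + 1)) \<le> (9 * n / \<sigma>) ^ (2 * n + 1)"
    unfolding of_nat_power by (rule power_mono) simp
  also have "\<dots> = (9 * n) ^ (2 * n + 1) / \<sigma> ^ (2 * n + 1)" by (simp add: power_divide)
  also have "\<dots> \<le> (9 * n) ^ (2 * n + 1) / \<sigma> ^ (2 * n + 2)"
    using \<sigma> by (intro divide_left_mono power_decreasing) auto
  also have "\<dots> = (9 * n) ^ (2 * n + 1) * \<sigma> powr - (2 * real n + 2)"
  proof -
    have "2 * real n + 2 = real (2 * n + 2)" by simp
    then have "\<sigma> powr - (2 * real n + 2) = inverse (\<sigma> ^ (2 * n + 2))"
      by (simp only: powr_minus powr_realpow[OF \<sigma>(1)])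
    then show ?thesis by (simp add: divide_inverse)
  qed
  finally show ?thesis .
qed

theorem mainTheorem8:
  "\<exists>C::real. \<forall>(\<sigma>::real) (L::(real^'n) set set).
      0 < \<sigma> \<and> \<sigma> < 1 \<and> finite L \<and> (\<forall>s\<in>L. is_segment s) \<and> exposed \<sigma> L
      \<longrightarrow> real (density L) \<le> C * \<sigma> powr (- (2 * real CARD('n) + 2))"
proof (intro exI allI impI)
  fix \<sigma> :: real and L :: "(real^'n) set set"
  assume H: "0 < \<sigma> \<and> \<sigma> < 1 \<and> finite L \<and> (\<forall>s\<in>L. is_segment s) \<and> exposed \<sigma> L"
  let ?M = "nat \<lceil>3 * CARD('n) / \<sigma>\<rceil>"
  have "density L \<le> (2 * ?M + 1) ^ (2 * CARD('n) + 1)"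
    using H by (intro density_exposed_segments_le) auto
  then have "real (density L) \<le> real ((2 * ?M + 1) ^ (2 * CARD('n) + 1))"
    by (simp only: of_nat_le_iff)
  also have "\<dots> \<le> (9 * CARD('n)) ^ (2 * CARD('n) + 1) * \<sigma> powr - (2 * real CARD('n) + 2)"
    using H by (intro grid_size_le_powr) auto
  finally show "real (density L) \<le> (9 * CARD('n)) ^ (2 * CARD('n) + 1) * \<sigma> powr - (2 * real CARD('n) + 2)" .
qed

end
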